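(* Let $G$ be a connected graph, $c\in V(G)$, and run the scan procedure at $c$ (with any processing order). Let $e$ and $f$ be distinct edges incident to $c$. If at least one of the following holds: (a) $e$ and $f$ span a square that has a chord; (b) $e$ and $f$ span a square whose top vertex is not unique; (c) $e$ and $f$ span more than one square; then $(e,f)\in\beta_c^*$, the transitive closure of $\beta_c$.
   Context: All graphs are finite, simple, undirected; $N(x)$ is the open neighborhood of $x$. For distinct edges $e=vu$, $f=vw$ sharing the vertex $v$, a square spanned by $e$ and $f$ is a 4-cycle $vuxw$ with $x\ne v$ adjacent to both $u$ and $w$; $x$ is its top vertex. The square has a chord if $uw\in E$ or $vx\in E$. A top vertex $x$ is unique if $|N(x)\cap N(v)|=2$. Scan procedure at $c$: the vertices of $N(c)$ are called primal, and edges incident to $c$ primal edges. Maintain two sets $I$ (incidence list) and $A$ (absence list) of unordered pairs of primal edges, both initially empty, and for every non-primal vertex $w\ne c$ a record of at most two "recorded primal neighbors" (first and second), initially none. Process the neighbors $u$ of $c$ one by one in an arbitrary order, and for each such $u$ process its neighbors $w\neq c$ in an arbitrary order: (1) if $w\in N(c)$, add $\{cu,cw\}$ to $A$; (2) else, if $w$ has no recorded primal neighbor, record $u$ as its first primal neighbor; (3) else, if $w$ has exactly one recorded primal neighbor $v$, record $u$ as its second primal neighbor, and if $\{cu,cv\}\notin I$ add $\{cu,cv\}$ to $I$, otherwise add $\{cu,cv\}$ to $A$; (4) else ($w$ has recorded first and second primal neighbors $v_1,v_2$) add $\{cv_1,cv_2\},\{cv_1,cu\},\{cv_2,cu\}$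 to $A$ (the record is not changed). After the procedure, $\alpha_c$ is the symmetric relation on primal edges consisting of the pairs in $I$, $\beta_c$ the symmetric relation consisting of the pairs in $A$, and $\overline{\alpha}_c$ the set of pairs of primal edges not in $I$. *)

theory Defs
  imports Main
begin

definition sgraph :: "'a set \<Rightarrow> ('a \<Rightarrow> 'a \<Rightarrow> bool) \<Rightarrow> bool" where
  "sgraph V E \<longleftrightarrow> finite V \<and> (\<forall>x y. E x y \<longrightarrow> x \<in> V \<and> y \<in> V)
     \<and> (\<forall>x y. E x y \<longrightarrow> E y x) \<and> (\<forall>x. \<not> E x x)"

definition connected_graph :: "'a set \<Rightarrow> ('a \<Rightarrow> 'a \<Rightarrow> bool) \<Rightarrow> bool" where
  "connected_graph V E \<longleftrightarrow> (\<forall>x\<in>V. \<forall>y\<in>V. (x, y) \<in> {(a, b). E a b}\<^sup>*)"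

definition Nbr :: "('a \<Rightarrow> 'a \<Rightarrow> bool) \<Rightarrow> 'a \<Rightarrow> 'a set" where
  "Nbr E x = {y. E x y}"

definition square_top :: "('a \<Rightarrow> 'a \<Rightarrow> bool) \<Rightarrow> 'a \<Rightarrow> 'a \<Rightarrow> 'a \<Rightarrow> 'a \<Rightarrow> bool" where
  "square_top E v u w x \<longleftrightarrow> E v u \<and> E v w \<and> u \<noteq> w \<and> x \<noteq> v \<and> E x u \<and> E x w"

(* state of the scan: incidence list I, absence list A (sets of unordered pairs of
   primal edges, edges being 2-element vertex sets), and for each vertex the list of
   recorded primal neighbours (at most two, in recording order) *)
type_synonym 'a scan_state = "'a set set set \<times> 'a set set set \<times> ('a \<Rightarrow> 'a list)"

definition scan_step :: "('a \<Rightarrow> 'a \<Rightarrow> bool) \<Rightarrow> 'a \<Rightarrow> 'a \<Rightarrow> 'a scan_state \<Rightarrow> 'a \<Rightarrow> 'a scan_state" where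
  "scan_step E c u st w = (case st of (I, A, r) \<Rightarrow>
     if E c w then (I, insert {{c,u},{c,w}} A, r)
     else (case r w of
        [] \<Rightarrow> (I, A, r(w := [u]))
      | [v] \<Rightarrow> (if {{c,u},{c,v}} \<notin> I
                then (insert {{c,u},{c,v}} I, A, r(w := [v, u]))
                else (I, insert {{c,u},{c,v}} A, r(w := [v, u])))
      | v1 # v2 # _ \<Rightarrow> (I, A \<union> {{{c,v1},{c,v2}}, {{c,v1},{c,u}}, {{c,v2},{c,u}}}, r)))"

definition scan :: "('a \<Rightarrow> 'a \<Rightarrow> bool) \<Rightarrow> 'a \<Rightarrow> 'a list \<Rightarrow> ('a \<Rightarrow> 'a list) \<Rightarrow> 'a scan_state" where
  "scan E c us ord = foldl (\<lambda>st u. foldl (scan_step E c u) st (ord u)) ({}, {}, (\<lambda>_. [])) us"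

definition valid_order :: "('a \<Rightarrow> 'a \<Rightarrow> bool) \<Rightarrow> 'a \<Rightarrow> 'a list \<Rightarrow> ('a \<Rightarrow> 'a list) \<Rightarrow> bool" where
  "valid_order E c us ord \<longleftrightarrow> distinct us \<and> set us = Nbr E c
     \<and> (\<forall>u \<in> Nbr E c. distinct (ord u) \<and> set (ord u) = Nbr E u - {c})"

definition beta :: "('a \<Rightarrow> 'a \<Rightarrow> bool) \<Rightarrow> 'a \<Rightarrow> 'a list \<Rightarrow> ('a \<Rightarrow> 'a list) \<Rightarrow> ('a set \<times> 'a set) set" where
  "beta E c us ord = {(e, f). {e, f} \<in> fst (snd (scan E c us ord))}"

end

theory Submission
  imports Defs
begin

text \<open>View the scan as a fold over the processed pairs (u, w), and call the primal
  neighbours that have processed a non-primal vertex x so far its visitors. The record of x is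
  the list of its first two visitors; the pair of their edges is always in the incidence list;
  and from the third visitor on, every visitor's edge is joined in the absence list to the edge
  of the first visitor.

  A chord uw, or a chord cx of a square with top x, puts the relevant pairs into the absence
  list directly by rule (1). A top x with |N(x) \<inter> N(c)| \<noteq> 2 has at least three
  visitors, u and w among them, so cu and cw are both joined to the edge of the first visitor.
  If there are two tops with exactly two primal neighbours each, both have the visitors u and w;
  whichever receives its second visitor later finds {cu, cw} already in the incidence list,
  and rule (3) moves it into the absence list.\<close>

abbreviation incidence :: "'a scan_state \<Rightarrow> 'a set set set" where
  "incidence st \<equiv> fst st"

abbreviation absence :: "'a scan_state \<Rightarrow> 'a set set set" where
  "absence st \<equiv> fst (snd st)"

abbreviation records :: "'a scan_state \<Rightarrow> 'a \<Rightarrow> 'a list" where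
  "records st \<equiv> snd (snd st)"

definition scan_from :: "('a \<Rightarrow> 'a \<Rightarrow> bool) \<Rightarrow> 'a \<Rightarrow> ('a \<times> 'a) list \<Rightarrow> 'a scan_state" where
  "scan_from E c p = foldl (\<lambda>st (u, w). scan_step E c u st w) ({}, {}, \<lambda>_. []) p"

definition visitors :: "('a \<times> 'a) list \<Rightarrow> 'a \<Rightarrow> 'a list" where
  "visitors p x = map fst (filter (\<lambda>(u, w). w = x) p)"

lemma scan_from_Nil [simp]: "scan_from E c [] = ({}, {}, \<lambda>_. [])"
  by (simp add: scan_from_def)

lemma scan_from_snoc [simp]: "scan_from E c (p @ [(a, w)]) = scan_step E c a (scan_from E c p) w"
  by (simp add: scan_from_def)

lemma visitors_Nil [simp]: "visitors [] x = []"
  by (simp add: visitors_def)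

lemma visitors_snoc [simp]: "visitors (p @ [(a, w)]) x = visitors p x @ (if w = x then [a] else [])"
  by (simp add: visitors_def)

lemma take_two_visitors_snoc:
  "take 2 (visitors (p @ [(a, w)]) x) = [a', b'] \<Longrightarrow> w \<noteq> x \<or> length (visitors p x) \<noteq> 1
   \<Longrightarrow> take 2 (visitors p x) = [a', b']"
  by (cases "visitors p x" rule: remdups_adj.cases) (auto split: if_splits)

lemma distinct_visitors: "distinct p \<Longrightarrow> distinct (visitors p x)"
  by (auto simp: visitors_def distinct_map inj_on_def)

lemma scan_step_mono:
  "incidence st \<subseteq> incidence (scan_step E c a st w) \<and> absence st \<subseteq> absence (scan_step E c a st w)"
  by (cases st) (auto simp: scan_step_def split: list.splits)

lemma scan_from_mono_snoc:
  "incidence (scan_from E c p) \<subseteq> incidence (scan_from E c (p @ [q]))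
   \<and> absence (scan_from E c p) \<subseteq> absence (scan_from E c (p @ [q]))"
  by (cases q) (simp add: scan_step_mono)

lemma records_scan_from:
  "\<not> E c x \<Longrightarrow> records (scan_from E c p) x = take 2 (visitors p x)"
proof (induction p rule: rev_induct)
  case (snoc q p)
  obtain a w where q: "q = (a, w)" by (cases q)
  obtain I A r where st: "scan_from E c p = (I, A, r)" by (cases "scan_from E c p")
  from snoc st have "r x = take 2 (visitors p x)" by simp
  with snoc.prems st q show ?case
    by (cases "w = x"; cases "visitors p x" rule: remdups_adj.cases)
      (auto simp: scan_step_def split: list.split)
qed simp

lemma absence_primal_pair:
  "(a, b) \<in> set p \<Longrightarrow> E c b \<Longrightarrow> {{c, a}, {c, b}} \<in> absence (scan_from E c p)"
proof (induction p rule: rev_induct)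
  case (snoc q p)
  show ?case
  proof (cases "(a, b) \<in> set p")
    case True
    with snoc scan_from_mono_snoc[of E c p q] show ?thesis by auto
  next
    case False
    with snoc.prems have "q = (a, b)" by auto
    with snoc.prems show ?thesis by (cases "scan_from E c p") (auto simp: scan_step_def)
  qed
qed simp

lemma incidence_first_visitors:
  "\<not> E c x \<Longrightarrow> take 2 (visitors p x) = [a, b] \<Longrightarrow> {{c, a}, {c, b}} \<in> incidence (scan_from E c p)"
proof (induction p rule: rev_induct)
  case (snoc q p)
  obtain a' w where q: "q = (a', w)" by (cases q)
  show ?case
  proof (cases "w = x \<and> length (visitors p x) = 1")
    case False
    with snoc.prems q have "take 2 (visitors p x) = [a, b]"
      using take_two_visitors_snoc[of p a' w x a b] by auto
    with snoc scan_from_mono_snoc[of E c p q] show ?thesis by auto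
  next
    case True
    then obtain v where v: "visitors p x = [v]" by (cases "visitors p x") auto
    with True snoc.prems q have "a = v" "b = a'" by auto
    moreover have "records (scan_from E c p) x = [v]"
      using records_scan_from[of E c x p] snoc.prems(1) v by simp
    ultimately show ?thesis
      using True q snoc.prems(1) by (cases "scan_from E c p") (auto simp: scan_step_def insert_commute)
  qed
qed simp

lemma absence_later_visitor:
  assumes "\<not> E c x" "3 \<le> length (visitors p x)" "y \<in> set (visitors p x)" "y \<noteq> hd (visitors p x)"
  shows "{{c, hd (visitors p x)}, {c, y}} \<in> absence (scan_from E c p)"
  using assms
proof (induction p rule: rev_induct)
  case (snoc q p)
  obtain a w where q: "q = (a, w)" by (cases q)
  show ?case
  proof (cases "w = x")
    case False
    with snoc scan_from_mono_snoc[of E c p q] q show ?thesis by auto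
  next
    case True
    with snoc.prems q obtain v1 v2 t where v: "visitors p x = v1 # v2 # t"
      by (cases "visitors p x" rule: remdups_adj.cases) auto
    obtain I A r where st: "scan_from E c p = (I, A, r)" by (cases "scan_from E c p")
    have "r x = [v1, v2]" using records_scan_from[of E c x p] snoc.prems(1) st v by simp
    then have A: "absence (scan_from E c (p @ [q]))
        = A \<union> {{{c, v1}, {c, v2}}, {{c, v1}, {c, a}}, {{c, v2}, {c, a}}}"
      using st q True snoc.prems(1) by (simp add: scan_step_def)
    show ?thesis
    proof (cases "y = a \<or> y = v2")
      case True
      with A v q \<open>w = x\<close> show ?thesis by auto
    next
      case False
      with snoc.prems q v \<open>w = x\<close> have "y \<in> set t" by auto
      then have "{{c, v1}, {c, y}} \<in> A"
        using snoc.IH[OF snoc.prems(1)] st v False snoc.prems(4) q \<open>w = x\<close>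
        by (cases t) auto
      with A v q \<open>w = x\<close> show ?thesis by auto
    qed
  qed
qed simp

lemma absence_shared_first_visitors:
  assumes "x\<^sub>1 \<noteq> x\<^sub>2" "\<not> E c x\<^sub>1" "\<not> E c x\<^sub>2"
    and "take 2 (visitors p x\<^sub>1) = [a, b]" "take 2 (visitors p x\<^sub>2) \<in> {[a, b], [b, a]}"
  shows "{{c, a}, {c, b}} \<in> absence (scan_from E c p)"
  using assms
proof (induction p arbitrary: x\<^sub>1 x\<^sub>2 rule: rev_induct)
  case (snoc q p)
  obtain a' w where q: "q = (a', w)" by (cases q)
  note prems = snoc.prems[unfolded q]
  have completed_last: "{{c, a}, {c, b}} \<in> absence (scan_from E c (p @ [q]))"
    if "\<not> E c y\<^sub>1" "\<not> E c y\<^sub>2" "w = y\<^sub>1" "visitors p y\<^sub>1 = [v]" "{v, a'} = {a, b}"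
      "take 2 (visitors p y\<^sub>2) \<in> {[a, b], [b, a]}" for y\<^sub>1 y\<^sub>2 v
  proof -
    have "{{c, a}, {c, b}} \<in> incidence (scan_from E c p)"
      using that(2,6) incidence_first_visitors[of E c y\<^sub>2 p] by (auto simp: insert_commute)
    moreover have "{{c, a'}, {c, v}} = {{c, a}, {c, b}}"
      using that(5) by (auto simp: doubleton_eq_iff)
    moreover have "records (scan_from E c p) y\<^sub>1 = [v]"
      using records_scan_from[of E c y\<^sub>1 p] that(1,4) by simp
    ultimately show ?thesis
      using that(1,3) q by (cases "scan_from E c p") (simp add: scan_step_def)
  qed
  consider (x\<^sub>1_completed) v where "w = x\<^sub>1" "visitors p x\<^sub>1 = [v]"
    | (x\<^sub>2_completed) v where "w = x\<^sub>2" "visitors p x\<^sub>2 = [v]"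
    | (earlier) "w \<noteq> x\<^sub>1 \<or> length (visitors p x\<^sub>1) \<noteq> 1" "w \<noteq> x\<^sub>2 \<or> length (visitors p x\<^sub>2) \<noteq> 1"
    using length_Suc_conv[of _ 0] by (metis One_nat_def length_0_conv)
  then show ?case
  proof cases
    case (x\<^sub>1_completed v)
    with prems show ?thesis by (intro completed_last[of x\<^sub>1 x\<^sub>2 v]) auto
  next
    case (x\<^sub>2_completed v)
    with prems show ?thesis by (intro completed_last[of x\<^sub>2 x\<^sub>1 v]) auto
  next
    case earlier
    have "take 2 (visitors p x\<^sub>1) = [a, b]"
      using take_two_visitors_snoc[OF prems(4) earlier(1)] .
    moreover have "take 2 (visitors p x\<^sub>2) \<in> {[a, b], [b, a]}"
      using prems(5) take_two_visitors_snoc[OF _ earlier(2)] by blast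
    ultimately show ?thesis
      using snoc.IH prems(1-3) scan_from_mono_snoc[of E c p q] by blast
  qed
qed simp

definition scan_trace :: "'a list \<Rightarrow> ('a \<Rightarrow> 'a list) \<Rightarrow> ('a \<times> 'a) list" where
  "scan_trace us ord = concat (map (\<lambda>u. map (Pair u) (ord u)) us)"

lemma scan_eq_scan_from: "scan E c us ord = scan_from E c (scan_trace us ord)"
proof -
  have "foldl (\<lambda>st u. foldl (scan_step E c u) st (ord u)) s us
      = foldl (\<lambda>st (u, w). scan_step E c u st w) s (scan_trace us ord)" for s
    by (induction us arbitrary: s) (simp_all add: scan_trace_def foldl_map)
  then show ?thesis by (simp add: scan_def scan_from_def)
qed

lemma beta_iff_absence:
  "(e, f) \<in> beta E c us ord \<longleftrightarrow> {e, f} \<in> absence (scan_from E c (scan_trace us ord))"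
  by (simp add: beta_def scan_eq_scan_from)

lemma beta_sym: "(e, f) \<in> beta E c us ord \<Longrightarrow> (f, e) \<in> beta E c us ord"
  by (simp add: beta_iff_absence insert_commute)

lemma set_scan_trace: "(a, b) \<in> set (scan_trace us ord) \<longleftrightarrow> a \<in> set us \<and> b \<in> set (ord a)"
  by (auto simp: scan_trace_def)

lemma set_visitors_scan_trace: "set (visitors (scan_trace us ord) x) = {a \<in> set us. x \<in> set (ord a)}"
  by (force simp: visitors_def scan_trace_def)

lemma distinct_scan_trace:
  "distinct us \<Longrightarrow> (\<forall>u\<in>set us. distinct (ord u)) \<Longrightarrow> distinct (scan_trace us ord)"
  by (induction us) (auto simp: scan_trace_def distinct_map inj_on_def)

locale scan_setting =
  fixes V :: "'a set" and E :: "'a \<Rightarrow> 'a \<Rightarrow> bool" and c :: 'a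
    and us :: "'a list" and ord :: "'a \<Rightarrow> 'a list"
  assumes graph: "sgraph V E" and order: "valid_order E c us ord"
begin

abbreviation trace :: "('a \<times> 'a) list" where
  "trace \<equiv> scan_trace us ord"

lemma sym_E: "E a b \<Longrightarrow> E b a"
  using graph by (simp add: sgraph_def)

lemma irrefl_E: "\<not> E a a"
  using graph by (simp add: sgraph_def)

lemma finite_common_Nbr: "finite (Nbr E x \<inter> Nbr E c)"
  using graph by (auto simp: sgraph_def Nbr_def intro: finite_subset[of _ V])

lemma in_trace: "E c a \<Longrightarrow> E a b \<Longrightarrow> b \<noteq> c \<Longrightarrow> (a, b) \<in> set trace"
  using order by (auto simp: valid_order_def Nbr_def set_scan_trace)

lemma set_visitors_trace: "x \<noteq> c \<Longrightarrow> set (visitors trace x) = Nbr E x \<inter> Nbr E c"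
  using order sym_E by (auto simp: valid_order_def Nbr_def set_visitors_scan_trace)

lemma distinct_visitors_trace: "distinct (visitors trace x)"
  using order by (auto simp: valid_order_def intro!: distinct_visitors distinct_scan_trace)

lemma primal_pair_in_beta:
  assumes "E c a" "E c b" "E a b"
  shows "({c, a}, {c, b}) \<in> beta E c us ord"
proof -
  have "b \<noteq> c" using assms(2) irrefl_E by blast
  with assms have "(a, b) \<in> set trace" by (intro in_trace)
  with assms(2) show ?thesis by (simp add: beta_iff_absence absence_primal_pair)
qed

lemma rtrancl_beta_diagonal:
  assumes "square_top E c u w x" "E c x"
  shows "({c, u}, {c, w}) \<in> (beta E c us ord)\<^sup>*"
proof -
  from assms(1) have "E c u" "E c w" "E u x" "E x w"
    using sym_E by (auto simp: square_top_def)
  with assms(2) have "({c, u}, {c, x}) \<in> beta E c us ord" "({c, x}, {c, w}) \<in> beta E c us ord"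
    by (simp_all add: primal_pair_in_beta)
  then show ?thesis by (rule rtrancl_into_rtrancl[OF r_into_rtrancl])
qed

lemma rtrancl_beta_top_not_unique:
  assumes top: "square_top E c u w x" and not_unique: "card (Nbr E x \<inter> Nbr E c) \<noteq> 2"
  shows "({c, u}, {c, w}) \<in> (beta E c us ord)\<^sup>*"
proof (cases "E c x")
  case True
  with top show ?thesis by (rule rtrancl_beta_diagonal)
next
  case False
  let ?vs = "visitors trace x"
  let ?first = "{c, hd ?vs}"
  from top have "x \<noteq> c" "u \<noteq> w" by (auto simp: square_top_def)
  from top have uw: "{u, w} \<subseteq> set ?vs"
    using set_visitors_trace[OF \<open>x \<noteq> c\<close>] sym_E by (auto simp: square_top_def Nbr_def)
  have "card {u, w} \<le> card (set ?vs)" using uw by (intro card_mono) auto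
  with \<open>u \<noteq> w\<close> not_unique set_visitors_trace[OF \<open>x \<noteq> c\<close>] have three: "3 \<le> length ?vs"
    using card_length[of ?vs] by simp
  have joined: "({c, y}, ?first) \<in> (beta E c us ord)\<^sup>* \<and> (?first, {c, y}) \<in> (beta E c us ord)\<^sup>*"
    if "y \<in> {u, w}" for y
  proof (cases "y = hd ?vs")
    case False
    with that uw three \<open>\<not> E c x\<close> have "(?first, {c, y}) \<in> beta E c us ord"
      using absence_later_visitor[of E c x trace y] by (auto simp: beta_iff_absence)
    with beta_sym[OF this] show ?thesis by (simp add: r_into_rtrancl)
  qed simp
  from joined[of u] joined[of w] show ?thesis by (meson insertI1 insertI2 rtrancl_trans)
qed

lemma visitors_unique_top:
  assumes top: "square_top E c u w x" and unique: "card (Nbr E x \<inter> Nbr E c) = 2"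
  shows "visitors trace x \<in> {[u, w], [w, u]}"
proof -
  from top have "x \<noteq> c" "u \<noteq> w" by (auto simp: square_top_def)
  from top have "{u, w} \<subseteq> Nbr E x \<inter> Nbr E c"
    using sym_E by (auto simp: square_top_def Nbr_def)
  with unique \<open>u \<noteq> w\<close> have "Nbr E x \<inter> Nbr E c = {u, w}"
    using card_subset_eq[OF finite_common_Nbr] by (metis card_2_iff)
  then have set_vs: "set (visitors trace x) = {u, w}"
    using set_visitors_trace[OF \<open>x \<noteq> c\<close>] by simp
  then have "length (visitors trace x) = 2"
    using distinct_card[OF distinct_visitors_trace, of x] \<open>u \<noteq> w\<close> by simp
  with set_vs distinct_visitors_trace[of x] \<open>u \<noteq> w\<close> show ?thesis
    by (cases "visitors trace x" rule: remdups_adj.cases) (auto simp: doubleton_eq_iff)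
qed

lemma rtrancl_beta_two_tops:
  assumes "card {x. square_top E c u w x} > 1"
  shows "({c, u}, {c, w}) \<in> (beta E c us ord)\<^sup>*"
proof -
  let ?S = "{x. square_top E c u w x}"
  from assms have "finite ?S" using card.infinite by fastforce
  with assms obtain x\<^sub>1 x\<^sub>2 where tops: "square_top E c u w x\<^sub>1" "square_top E c u w x\<^sub>2" "x\<^sub>1 \<noteq> x\<^sub>2"
    using card_le_Suc0_iff_eq[of ?S] by (auto simp: not_le[symmetric])
  show ?thesis
  proof (cases "E c x\<^sub>1 \<or> E c x\<^sub>2 \<or> card (Nbr E x\<^sub>1 \<inter> Nbr E c) \<noteq> 2 \<or> card (Nbr E x\<^sub>2 \<inter> Nbr E c) \<noteq> 2")
    case True
    with tops show ?thesis using rtrancl_beta_diagonal rtrancl_beta_top_not_unique by blast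
  next
    case False
    then have vis\<^sub>1: "visitors trace x\<^sub>1 \<in> {[u, w], [w, u]}"
      and vis\<^sub>2: "visitors trace x\<^sub>2 \<in> {[u, w], [w, u]}"
      using visitors_unique_top[OF tops(1)] visitors_unique_top[OF tops(2)] by simp_all
    have "{{c, u}, {c, w}} \<in> absence (scan_from E c trace)"
    proof (cases "visitors trace x\<^sub>1 = [u, w]")
      case True
      with vis\<^sub>2 tops(3) False show ?thesis
        using absence_shared_first_visitors[of x\<^sub>1 x\<^sub>2 E c trace u w] by auto
    next
      case reversed: False
      with vis\<^sub>1 vis\<^sub>2 tops(3) False have "{{c, w}, {c, u}} \<in> absence (scan_from E c trace)"
        using absence_shared_first_visitors[of x\<^sub>1 x\<^sub>2 E c trace w u] by auto
      then show ?thesis by (simp add: insert_commute)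
    qed
    then show ?thesis by (simp add: beta_iff_absence r_into_rtrancl)
  qed
qed

end

theorem mainTheorem4:
  fixes V :: "'a set" and E :: "'a \<Rightarrow> 'a \<Rightarrow> bool" and c u w :: 'a
    and us :: "'a list" and ord :: "'a \<Rightarrow> 'a list"
  assumes "sgraph V E" and "connected_graph V E" and "c \<in> V"
    and "valid_order E c us ord"
    and "E c u" and "E c w" and "u \<noteq> w"
    and "(\<exists>x. square_top E c u w x \<and> (E u w \<or> E c x))
         \<or> (\<exists>x. square_top E c u w x \<and> card (Nbr E x \<inter> Nbr E c) \<noteq> 2)
         \<or> card {x. square_top E c u w x} > 1"
  shows "({c,u}, {c,w}) \<in> (beta E c us ord)\<^sup>*"
proof -
  interpret scan_setting V E c us ord
    using assms(1,4) by unfold_locales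
  from assms(8) show ?thesis
    using primal_pair_in_beta[OF assms(5,6)] rtrancl_beta_diagonal
      rtrancl_beta_top_not_unique rtrancl_beta_two_tops
    by blast
qed

end
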